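(* There exists a finite-state deep sequence $S\in\{0,1\}^\infty$.
   Context: A finite-state transducer (FST) is a 4-tuple $T=(Q,\delta,\nu,q_0)$ with $Q$ a nonempty finite set of states, $\delta:Q\times\{0,1\}\to Q$, $\nu:Q\times\{0,1\}\to\{0,1\}^*$, $q_0\in Q$, every state reachable from $q_0$; $\widehat\delta(\lambda)=q_0$, $\widehat\delta(xa)=\delta(\widehat\delta(x),a)$, $T(\lambda)=\lambda$, $T(xa)=T(x)\nu(\widehat\delta(x),a)$. Fix a standard binary representation $\sigma_T$ of each FST, $|T|=|\sigma_T|$, $\mathrm{FST}^{\leq k}=\{T:|T|\le k\}$, and $\mathrm{FS}^k(x)=\min\{|p|:\exists T\in\mathrm{FST}^{\le k},\ T(p)=x\}$. For a sequence $S$, $S\upharpoonright n$ is its first $n$ bits. $S$ is finite-state deep if $(\exists\alpha>0)(\forall k\in\mathbb{N})(\exists k'\in\mathbb{N})(\exists^\infty n\in\mathbb{N})\ \mathrm{FS}^k(S\upharpoonright n)-\mathrm{FS}^{k'}(S\upharpoonright n)\ge\alpha n$. *)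

theory Defs
  imports Complex_Main "HOL-Library.Extended_Real"
begin

text \<open>Binary alphabet {0,1} is rendered as bool (False = 0, True = 1); binary strings are bool lists.
A finite-state transducer T = (Q, delta, nu, q0) is rendered as a tuple (n, delta, nu, q0) with
state set Q = {0..<n}.  Only the values of delta and nu on Q matter.\<close>

type_synonym fst = "nat \<times> (nat \<Rightarrow> bool \<Rightarrow> nat) \<times> (nat \<Rightarrow> bool \<Rightarrow> bool list) \<times> nat"

definition fst_states :: "fst \<Rightarrow> nat" where "fst_states T = fst T"
definition fst_delta :: "fst \<Rightarrow> nat \<Rightarrow> bool \<Rightarrow> nat" where "fst_delta T = fst (snd T)"
definition fst_nu :: "fst \<Rightarrow> nat \<Rightarrow> bool \<Rightarrow> bool list" where "fst_nu T = fst (snd (snd T))"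
definition fst_q0 :: "fst \<Rightarrow> nat" where "fst_q0 T = snd (snd (snd T))"

definition delta_hat :: "fst \<Rightarrow> bool list \<Rightarrow> nat" where
  "delta_hat T x = foldl (fst_delta T) (fst_q0 T) x"

lemma delta_hat_Nil: "delta_hat T [] = fst_q0 T"
  and delta_hat_snoc: "delta_hat T (x @ [a]) = fst_delta T (delta_hat T x) a"
  by (simp_all add: delta_hat_def)

primrec fst_out_rev :: "fst \<Rightarrow> bool list \<Rightarrow> bool list" where
  "fst_out_rev T [] = []"
| "fst_out_rev T (a # r) = fst_out_rev T r @ fst_nu T (delta_hat T (rev r)) a"

definition fst_out :: "fst \<Rightarrow> bool list \<Rightarrow> bool list" where
  "fst_out T x = fst_out_rev T (rev x)"

lemma fst_out_Nil: "fst_out T [] = []"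
  and fst_out_snoc: "fst_out T (x @ [a]) = fst_out T x @ fst_nu T (delta_hat T x) a"
  by (simp_all add: fst_out_def)

definition is_FST :: "fst \<Rightarrow> bool" where
  "is_FST T \<longleftrightarrow> 0 < fst_states T \<and> fst_q0 T < fst_states T \<and>
     (\<forall>q < fst_states T. \<forall>a. fst_delta T q a < fst_states T) \<and>
     (\<forall>q < fst_states T. \<exists>x. delta_hat T x = q)"

text \<open>A fixed standard binary representation sigma_T (self-delimiting codes).\<close>
definition enc_nat :: "nat \<Rightarrow> bool list" where
  "enc_nat m = replicate m True @ [False]"

definition enc_bits :: "bool list \<Rightarrow> bool list" where
  "enc_bits xs = concat (map (\<lambda>b. [True, b]) xs) @ [False]"

definition fst_code :: "fst \<Rightarrow> bool list" where
  "fst_code T = enc_nat (fst_states T) @ enc_nat (fst_q0 T) @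
     concat (map (\<lambda>(q, a). enc_nat (fst_delta T q a) @ enc_bits (fst_nu T q a))
                 (List.product [0..<fst_states T] [False, True]))"

definition fst_size :: "fst \<Rightarrow> nat" where
  "fst_size T = length (fst_code T)"

text \<open>FS^k(x) = min { |p| : T in FST^{<=k}, T(p) = x } (infinity if no such p).\<close>
definition FS :: "nat \<Rightarrow> bool list \<Rightarrow> enat" where
  "FS k x = (INF p \<in> {p. \<exists>T. is_FST T \<and> fst_size T \<le> k \<and> fst_out T p = x}. enat (length p))"

definition prefix_seq :: "(nat \<Rightarrow> bool) \<Rightarrow> nat \<Rightarrow> bool list" where
  "prefix_seq S n = map S [0..<n]"

definition fs_deep :: "(nat \<Rightarrow> bool) \<Rightarrow> bool" where
  "fs_deep S \<longleftrightarrow> (\<exists>\<alpha>::real > 0. \<forall>k. \<exists>k'. \<exists>\<^sub>\<infinity>n.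
      ereal_of_enat (FS k (prefix_seq S n)) - ereal_of_enat (FS k' (prefix_seq S n)) \<ge> ereal (\<alpha> * real n))"

end

theory Submission
  imports Defs "HOL-Library.Nat_Bijection"
begin

text \<open>By counting, for every \<open>K\<close> there are arbitrarily long words \<open>x\<close> none of whose windows
  \<open>drop j x @ take j' x\<close> (\<open>j, j' < K\<close>) is output by a machine with \<open>K\<close> states and outputs
  of length at most \<open>K\<close> from fewer than \<open>|x| / 2\<close> input bits.  A transducer of size below \<open>K\<close> that outputs
  \<open>w x\<^sup>r\<^sup>+\<^sup>1\<close> runs through \<open>r\<close> such windows one after the other, so it needs at least
  \<open>r |x| / 2\<close> input bits, whereas a fixed two-state transducer depending only on \<open>x\<close> prints
  \<open>w x\<^sup>r\<^sup>+\<^sup>1\<close> from \<open>2 |w| + r + 1\<close> bits.  The deep sequence is built in stages, each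
  appending many copies of such a block to the prefix built so far; dovetailing makes every
  compression level \<open>k\<close> recur at infinitely many stages, and there the gap between
  \<open>FS\<^sup>k\<close> and the complexity for the fixed transducer is an eighth of the length.\<close>

fun run_output :: "(nat \<Rightarrow> bool \<Rightarrow> nat) \<Rightarrow> (nat \<Rightarrow> bool \<Rightarrow> bool list) \<Rightarrow> nat \<Rightarrow> bool list \<Rightarrow> bool list"
where
  "run_output d v q [] = []"
| "run_output d v q (a # p) = v q a @ run_output d v (d q a) p"

lemma run_output_append:
  "run_output d v q (p @ p') = run_output d v q p @ run_output d v (foldl d q p) p'"
  by (induction p arbitrary: q) auto

lemma fst_out_eq_run_output: "fst_out T p = run_output (fst_delta T) (fst_nu T) (fst_q0 T) p"
  by (induction p rule: rev_induct)
     (simp_all add: fst_out_Nil fst_out_snoc run_output_append delta_hat_def)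

lemma run_output_cong:
  assumes "q < n" "\<And>q a. q < n \<Longrightarrow> d q a < n"
    and "\<And>q a. q < n \<Longrightarrow> d' q a = d q a" "\<And>q a. q < n \<Longrightarrow> v' q a = v q a"
  shows "run_output d v q p = run_output d' v' q p"
  using assms(1) by (induction p arbitrary: q) (simp_all add: assms(2-4))

lemma foldl_less: "q < K \<Longrightarrow> (\<And>q a. q < K \<Longrightarrow> d q a < K) \<Longrightarrow> foldl d q p < K"
  by (induction p arbitrary: q) auto

lemma run_output_split_length:
  assumes "\<And>q a. length (v q a) \<le> K" "0 < K" "N \<le> length (run_output d v q p)"
  shows "\<exists>p1 p2. p = p1 @ p2 \<and> N \<le> length (run_output d v q p1) \<and> length (run_output d v q p1) < N + K"
  using assms(3)
proof (induction p arbitrary: q N)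
  case Nil
  then show ?case using assms(2) by (intro exI[of _ "[]"]) simp
next
  case (Cons a p)
  show ?case
  proof (cases "N \<le> length (v q a)")
    case True
    then show ?thesis
    proof (cases "N = 0")
      case True
      then show ?thesis using assms(2) by (intro exI[of _ "[]"] exI[of _ "a # p"]) simp
    next
      case False
      then show ?thesis using \<open>N \<le> length (v q a)\<close> assms(1)[of q a]
        by (intro exI[of _ "[a]"] exI[of _ p]) simp
    qed
  next
    case False
    then have "N - length (v q a) \<le> length (run_output d v (d q a) p)" using Cons.prems by simp
    from Cons.IH[OF this] obtain p1 p2 where "p = p1 @ p2"
      "N - length (v q a) \<le> length (run_output d v (d q a) p1)"
      "length (run_output d v (d q a) p1) < N - length (v q a) + K" by blast
    then show ?thesis using False by (intro exI[of _ "a # p1"] exI[of _ p2]) auto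
  qed
qed

lemma run_output_split:
  assumes "\<And>q a. length (v q a) \<le> K" "0 < K" "run_output d v q p = u @ y"
  shows "\<exists>p1 p2 j. p = p1 @ p2 \<and> j < K \<and> run_output d v q p1 = u @ take j y \<and>
           run_output d v (foldl d q p1) p2 = drop j y"
proof -
  have "length u \<le> length (run_output d v q p)" using assms(3) by simp
  from run_output_split_length[OF assms(1,2) this] obtain p1 p2 where p: "p = p1 @ p2"
    "length u \<le> length (run_output d v q p1)" "length (run_output d v q p1) < length u + K"
    by blast
  define l where "l = length (run_output d v q p1)"
  have "run_output d v q p1 @ run_output d v (foldl d q p1) p2 = u @ y"
    using assms(3) p(1) by (simp add: run_output_append)
  then have "run_output d v q p1 = take l (u @ y)" "run_output d v (foldl d q p1) p2 = drop l (u @ y)"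
    unfolding l_def by (metis append_eq_conv_conj)+
  moreover have "take l (u @ y) = u @ take (l - length u) y" "drop l (u @ y) = drop (l - length u) y"
    using p(2) by (simp_all add: l_def)
  moreover have "l - length u < K" using p(2,3) by (simp add: l_def less_diff_conv2)
  ultimately show ?thesis
    using p(1) by (intro exI[of _ p1] exI[of _ p2] exI[of _ "l - length u"]) simp
qed

text \<open>Normalised outside the state set \<open>{..<K}\<close>, so that there are only finitely many.\<close>

definition bounded_machines :: "nat \<Rightarrow> ((nat \<Rightarrow> bool \<Rightarrow> nat) \<times> (nat \<Rightarrow> bool \<Rightarrow> bool list)) set"
where
  "bounded_machines K = {(d, v). \<forall>q a.
     if q < K then d q a < K \<and> length (v q a) \<le> K else d q a = 0 \<and> v q a = []}"

lemma inj_case_prod: "inj case_prod"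
  by (rule injI) (metis curry_case_prod)

lemma finite_bounded_machines: "finite (bounded_machines K)"
proof -
  let ?A = "{..<K} \<times> (UNIV :: bool set)"
  define Ds where "Ds = {f :: nat \<times> bool \<Rightarrow> nat.
    \<forall>s. (s \<in> ?A \<longrightarrow> f s \<in> {..<K}) \<and> (s \<notin> ?A \<longrightarrow> f s = 0)}"
  define Vs where "Vs = {f :: nat \<times> bool \<Rightarrow> bool list.
    \<forall>s. (s \<in> ?A \<longrightarrow> f s \<in> {xs. set xs \<subseteq> UNIV \<and> length xs \<le> K}) \<and> (s \<notin> ?A \<longrightarrow> f s = [])}"
  have "finite Ds" unfolding Ds_def by (rule finite_set_of_finite_funs) simp_all
  moreover have "finite Vs" unfolding Vs_def
    by (rule finite_set_of_finite_funs) (use finite_lists_length_le[of "UNIV :: bool set" K] in simp_all)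
  ultimately have "finite (case_prod -` Ds \<times> case_prod -` Vs)"
    by (intro finite_cartesian_product finite_vimageI inj_case_prod)
  moreover have "case_prod d \<in> Ds \<and> case_prod v \<in> Vs" if "(d, v) \<in> bounded_machines K" for d v
  proof -
    have "if q < K then d q a < K \<and> length (v q a) \<le> K else d q a = 0 \<and> v q a = []" for q a
      using that unfolding bounded_machines_def by simp
    then show ?thesis unfolding Ds_def Vs_def by (simp split: if_splits)
  qed
  then have "bounded_machines K \<subseteq> case_prod -` Ds \<times> case_prod -` Vs" by auto
  ultimately show ?thesis by (rule finite_subset[rotated])
qed

lemma bounded_machinesD:
  assumes "(d, v) \<in> bounded_machines K"
  shows "length (v q a) \<le> K" and "q < K \<Longrightarrow> d q a < K"
proof -
  have dv: "if q < K then d q a < K \<and> length (v q a) \<le> K else d q a = 0 \<and> v q a = []"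
    using assms unfolding bounded_machines_def by simp
  then show "length (v q a) \<le> K" by (cases "q < K") simp_all
  show "d q a < K" if "q < K" using dv that by simp
qed

lemma length_enc_bits: "length (enc_bits xs) = 2 * length xs + 1"
  by (induction xs) (auto simp: enc_bits_def)

lemma fst_states_le_size: "fst_states T \<le> fst_size T"
  by (simp add: fst_size_def fst_code_def enc_nat_def)

lemma length_fst_nu_le_size:
  assumes "q < fst_states T"
  shows "length (fst_nu T q a) \<le> fst_size T"
proof -
  let ?F = "\<lambda>(q, a). enc_nat (fst_delta T q a) @ enc_bits (fst_nu T q a)"
  let ?L = "List.product [0..<fst_states T] [False, True]"
  have "(q, a) \<in> set ?L"
    using assms by (cases a) auto
  then have "?F (q, a) \<in> set (map ?F ?L)"
    unfolding set_map by (rule imageI)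
  then obtain ys zs where "map ?F ?L = ys @ ?F (q, a) # zs"
    using split_list by fast
  then have "length (?F (q, a)) \<le> length (concat (map ?F ?L))"
    by simp
  then show ?thesis by (simp add: fst_size_def fst_code_def length_enc_bits)
qed

lemma bounded_machine_of_fst:
  assumes "is_FST T" "fst_size T < K"
  obtains d v where "(d, v) \<in> bounded_machines K" "fst_q0 T < K"
    "\<And>p. fst_out T p = run_output d v (fst_q0 T) p"
proof
  let ?n = "fst_states T"
  define d where "d = (\<lambda>q a. if q < ?n then fst_delta T q a else 0)"
  define v where "v = (\<lambda>q a. if q < ?n then fst_nu T q a else [])"
  have T: "fst_q0 T < ?n" "\<And>q a. q < ?n \<Longrightarrow> fst_delta T q a < ?n"
    using assms(1) by (auto simp: is_FST_def)
  have n: "?n < K" using fst_states_le_size[of T] assms(2) by simp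
  have nu: "length (fst_nu T q a) \<le> K" if "q < ?n" for q a
    using length_fst_nu_le_size[OF that, of a] assms(2) by linarith
  have delta: "fst_delta T q a < K" if "q < ?n" for q a
    using T(2)[OF that, of a] n by linarith
  show "(d, v) \<in> bounded_machines K"
    using n nu delta by (auto simp: bounded_machines_def d_def v_def)
  show "fst_q0 T < K" using T n by simp
  show "fst_out T p = run_output d v (fst_q0 T) p" for p
    unfolding fst_out_eq_run_output by (rule run_output_cong[OF T]) (simp_all add: d_def v_def)
qed

text \<open>The windows \<open>drop j x @ take j' x\<close> are the pieces into which \<open>run_output_split\<close> cuts
  a run that outputs a suffix of \<open>x\<^sup>r\<^sup>+\<^sup>1\<close> starting inside the first copy.\<close>

definition cyclic_incompressible :: "nat \<Rightarrow> bool list \<Rightarrow> bool" where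
  "cyclic_incompressible K x \<longleftrightarrow> (\<forall>(d, v) \<in> bounded_machines K. \<forall>q < K. \<forall>j < K. \<forall>j' < K. \<forall>p.
     run_output d v q p = drop j x @ take j' x \<longrightarrow> length x \<le> 2 * length p)"

lemma cyclic_incompressibleD:
  assumes "cyclic_incompressible K x" "(d, v) \<in> bounded_machines K" "q < K" "j < K" "j' < K"
    and "run_output d v q p = drop j x @ take j' x"
  shows "length x \<le> 2 * length p"
  using assms(1)[unfolded cyclic_incompressible_def, THEN bspec, OF assms(2)] assms(3-6) by simp

lemma run_output_replicate_length:
  assumes M: "(d, v) \<in> bounded_machines K"
    and x: "cyclic_incompressible K x" "K < length x"
  shows "q < K \<Longrightarrow> j < K \<Longrightarrow> run_output d v q p = drop j (concat (replicate (Suc r) x)) \<Longrightarrow>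
    r * length x \<le> 2 * length p"
proof (induction r arbitrary: q j p)
  case 0
  then show ?case by simp
next
  case (Suc r)
  note v = bounded_machinesD(1)[OF M] and d = bounded_machinesD(2)[OF M]
  have K: "0 < K" using Suc.prems(1) by simp
  have "run_output d v q p = drop j x @ concat (replicate (Suc r) x)"
    using Suc.prems x(2) by simp
  from run_output_split[OF v K this] obtain p1 p2 j' where p: "p = p1 @ p2" "j' < K"
      "run_output d v q p1 = drop j x @ take j' (concat (replicate (Suc r) x))"
      "run_output d v (foldl d q p1) p2 = drop j' (concat (replicate (Suc r) x))"
    by blast
  have "run_output d v q p1 = drop j x @ take j' x"
    using p(2,3) x(2) by simp
  then have "length x \<le> 2 * length p1"
    using cyclic_incompressibleD[OF x(1) M Suc.prems(1,2) p(2)] by simp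
  moreover have "r * length x \<le> 2 * length p2"
    using Suc.IH[OF foldl_less[OF Suc.prems(1) d] p(2,4)] .
  ultimately show ?case using p(1) by simp
qed

lemma fst_out_replicate_length:
  assumes "is_FST T" "fst_size T < K" "cyclic_incompressible K x" "K < length x"
    and "fst_out T p = w @ concat (replicate (Suc r) x)"
  shows "r * length x \<le> 2 * length p"
proof -
  obtain d v where M: "(d, v) \<in> bounded_machines K" and q0: "fst_q0 T < K"
    and out: "\<And>p. fst_out T p = run_output d v (fst_q0 T) p"
    using bounded_machine_of_fst[OF assms(1,2)] by blast
  note v = bounded_machinesD(1)[OF M] and d = bounded_machinesD(2)[OF M]
  have K: "0 < K" using q0 by simp
  from run_output_split[OF v K assms(5)[unfolded out]] obtain p1 p2 j where p: "p = p1 @ p2" "j < K"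
      "run_output d v (foldl d (fst_q0 T) p1) p2 = drop j (concat (replicate (Suc r) x))"
    by blast
  have "r * length x \<le> 2 * length p2"
    using run_output_replicate_length[OF M assms(3,4) foldl_less[OF q0 d] p(2,3)] .
  then show ?thesis using p(1) by simp
qed

lemma card_bool_lists_length_less: "card {xs :: bool list. length xs < n} < 2 ^ n"
proof (cases n)
  case (Suc k)
  have "{xs :: bool list. length xs < n} = {xs. set xs \<subseteq> UNIV \<and> length xs \<le> k}"
    using Suc by auto
  moreover have "card \<dots> = 2 ^ n - 1"
    using card_lists_length_le[of "UNIV :: bool set" k] sum_power2[of n]
    by (simp add: Suc atLeast0LessThan lessThan_Suc_atMost del: Collect_const)
  ultimately show ?thesis by simp
qed simp

lemma finite_bool_lists_length_less: "finite {xs :: bool list. length xs < n}"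
  by (rule finite_subset[OF _ finite_lists_length_le[of "UNIV :: bool set" n]]) auto

lemma ex_bool_list_notin:
  assumes "finite B" "card B < 2 ^ n"
  shows "\<exists>xs :: bool list. length xs = n \<and> xs \<notin> B"
proof (rule ccontr)
  assume "\<not> ?thesis"
  then have "card {xs :: bool list. set xs \<subseteq> UNIV \<and> length xs = n} \<le> card B"
    by (intro card_mono[OF assms(1)]) auto
  then show False
    using assms(2) card_lists_length_eq[of "UNIV :: bool set" n] by simp
qed

definition short_outputs :: "nat \<Rightarrow> nat \<Rightarrow> bool list set" where
  "short_outputs K m = (\<lambda>((d, v), q, p). run_output d v q p) `
     (bounded_machines K \<times> {..<K} \<times> {p. length p < m})"

lemma run_output_in_short_outputs:
  "(d, v) \<in> bounded_machines K \<Longrightarrow> q < K \<Longrightarrow> length p < m \<Longrightarrow> run_output d v q p \<in> short_outputs K m"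
  unfolding short_outputs_def by (rule image_eqI[where x = "((d, v), q, p)"]) simp_all

lemma finite_short_outputs: "finite (short_outputs K m)"
  by (simp add: short_outputs_def finite_bounded_machines finite_bool_lists_length_less)

lemma card_short_outputs_le: "card (short_outputs K m) \<le> card (bounded_machines K) * K * 2 ^ m"
proof -
  have "card (short_outputs K m) \<le> card (bounded_machines K) * (K * card {p :: bool list. length p < m})"
    unfolding short_outputs_def by (rule card_image_le[THEN order_trans])
      (simp_all add: finite_bounded_machines finite_bool_lists_length_less card_cartesian_product)
  also have "\<dots> \<le> card (bounded_machines K) * (K * 2 ^ m)"
    using card_bool_lists_length_less[of m] by simp
  finally show ?thesis by simp
qed

text \<open>A word \<open>x\<close> of length \<open>2 m\<close> that is not \<open>cyclic_incompressible\<close> is recovered as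
  \<open>glue\<close> of its first \<open>j < K\<close> bits and a window in \<open>short_outputs K m\<close>; for large \<open>m\<close> there
  are fewer than \<open>2\<^sup>2\<^sup>m\<close> such pairs.\<close>

lemma ex_cyclic_incompressible: "\<exists>x. L \<le> length x \<and> cyclic_incompressible K x"
proof -
  define C where "C = 2 ^ K * (card (bounded_machines K) * K)"
  define m where "m = C + L"
  define Outs where "Outs = short_outputs K m"
  define Heads where "Heads = {t :: bool list. length t < K}"
  define glue where "glue = (\<lambda>(t, z). t @ take (2 * m - length t) (z :: bool list))"
  have fin: "finite (Heads \<times> Outs)"
    by (simp add: Heads_def Outs_def finite_short_outputs finite_bool_lists_length_less)
  have "card Heads * card Outs \<le> 2 ^ K * (card (bounded_machines K) * K * 2 ^ m)"
    using card_bool_lists_length_less[of K] card_short_outputs_le[of K m]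
    unfolding Heads_def Outs_def by (intro mult_le_mono) simp_all
  then have "card (Heads \<times> Outs) \<le> C * 2 ^ m"
    by (simp add: card_cartesian_product C_def)
  then have "card (glue ` (Heads \<times> Outs)) \<le> C * 2 ^ m"
    using card_image_le[OF fin, of glue] by linarith
  also have "\<dots> < 2 ^ m * 2 ^ m"
    using less_le_trans[OF less_exp power_increasing[of C m "2 :: nat"]] by (simp add: m_def)
  also have "\<dots> = 2 ^ (2 * m)"
    by (simp add: mult_2 power_add)
  finally have "card (glue ` (Heads \<times> Outs)) < 2 ^ (2 * m)" .
  then obtain x where x: "length x = 2 * m" "x \<notin> glue ` (Heads \<times> Outs)"
    using ex_bool_list_notin fin by blast
  have "cyclic_incompressible K x"
    unfolding cyclic_incompressible_def
  proof (clarify, rule ccontr)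
    fix d v q j j' p
    assume M: "(d, v) \<in> bounded_machines K" and q: "q < K" and j: "j < K"
      and out: "run_output d v q p = drop j x @ take j' x" and "\<not> length x \<le> 2 * length p"
    then have "length p < m" using x(1) by simp
    then have "run_output d v q p \<in> Outs" "take j x \<in> Heads"
      using run_output_in_short_outputs[OF M q] j unfolding Outs_def Heads_def by simp_all
    moreover have "glue (take j x, run_output d v q p) = x"
      using x(1) by (simp add: glue_def out min_def)
    ultimately have "x \<in> glue ` (Heads \<times> Outs)"
      by (metis SigmaI imageI)
    then show False using x(2) by contradiction
  qed
  then show ?thesis using x(1) by (intro exI[of _ x]) (simp add: m_def)
qed

text \<open>Reads \<open>1 b\<close> as the literal bit \<open>b\<close> and \<open>0\<close> as the block \<open>x\<close>.\<close>

definition block_fst :: "bool list \<Rightarrow> fst" where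
  "block_fst x = (2, \<lambda>q a. if q = 0 \<and> a then 1 else 0,
                     \<lambda>q a. if q = 0 then (if a then [] else x) else [a], 0)"

lemma block_fst_simps:
  "fst_states (block_fst x) = 2" "fst_q0 (block_fst x) = 0"
  "fst_delta (block_fst x) q a = (if q = 0 \<and> a then 1 else 0)"
  "fst_nu (block_fst x) q a = (if q = 0 then (if a then [] else x) else [a])"
  by (simp_all add: block_fst_def fst_states_def fst_q0_def fst_delta_def fst_nu_def)

lemma is_FST_block_fst: "is_FST (block_fst x)"
proof -
  have "delta_hat (block_fst x) [] = 0" "delta_hat (block_fst x) [True] = 1"
    by (simp_all add: delta_hat_def block_fst_simps)
  then have "\<forall>q < 2. \<exists>y. delta_hat (block_fst x) y = q"
    by (metis One_nat_def less_2_cases)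
  then show ?thesis by (simp add: is_FST_def block_fst_simps)
qed

lemma fst_out_block_fst:
  "fst_out (block_fst x) (enc_bits w @ replicate r False) = w @ concat (replicate (Suc r) x)"
proof -
  let ?run = "run_output (fst_delta (block_fst x)) (fst_nu (block_fst x))"
  let ?lits = "concat (map (\<lambda>b. [True, b]) w)"
  have lits: "?run 0 ?lits = w \<and> foldl (fst_delta (block_fst x)) 0 ?lits = 0"
    by (induction w) (auto simp: block_fst_simps)
  have "?run 0 (replicate n False) = concat (replicate n x)" for n
    by (induction n) (auto simp: block_fst_simps)
  from this[of "Suc r"] show ?thesis
    unfolding fst_out_eq_run_output enc_bits_def
    by (simp add: block_fst_simps run_output_append lits)
qed

definition incompressible_block :: "nat \<Rightarrow> bool list" where
  "incompressible_block K = (SOME x. K + 8 \<le> length x \<and> cyclic_incompressible K x)"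

lemma incompressible_block_spec:
  "K + 8 \<le> length (incompressible_block K) \<and> cyclic_incompressible K (incompressible_block K)"
  unfolding incompressible_block_def by (rule someI_ex) (rule ex_cyclic_incompressible)

text \<open>Stage \<open>j\<close> serves the compression level \<open>fst (prod_decode j)\<close>, so every level is served
  infinitely often; the \<open>8 |w| + 9\<close> copies of its block make the current prefix \<open>w\<close> negligible.\<close>

primrec deep_prefix :: "nat \<Rightarrow> bool list" where
  "deep_prefix 0 = []"
| "deep_prefix (Suc j) = deep_prefix j @
     concat (replicate (8 * length (deep_prefix j) + 9) (incompressible_block (Suc (fst (prod_decode j)))))"

definition deep_seq :: "nat \<Rightarrow> bool" where
  "deep_seq i = deep_prefix (Suc i) ! i"

lemma deep_prefix_mono: "j \<le> j' \<Longrightarrow> \<exists>u. deep_prefix j' = deep_prefix j @ u"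
  by (induction j' rule: dec_induct) auto

lemma length_deep_prefix_ge: "j \<le> length (deep_prefix j)"
proof (induction j)
  case (Suc j)
  have "8 \<le> length (incompressible_block (Suc (fst (prod_decode j))))"
    using incompressible_block_spec by (meson le_add2 order_trans)
  then have "1 \<le> (8 * length (deep_prefix j) + 9) * length (incompressible_block (Suc (fst (prod_decode j))))"
    by simp
  moreover have "length (deep_prefix (Suc j)) = length (deep_prefix j) +
      (8 * length (deep_prefix j) + 9) * length (incompressible_block (Suc (fst (prod_decode j))))"
    by (simp add: length_concat sum_list_replicate)
  ultimately show ?case using Suc by linarith
qed simp

lemma prefix_seq_deep_seq: "prefix_seq deep_seq (length (deep_prefix j)) = deep_prefix j"
proof (rule nth_equalityI)
  fix i assume "i < length (prefix_seq deep_seq (length (deep_prefix j)))"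
  then have i: "i < length (deep_prefix j)" by (simp add: prefix_seq_def)
  have "i < length (deep_prefix (Suc i))" using length_deep_prefix_ge[of "Suc i"] by simp
  moreover obtain u u' where "deep_prefix (max j (Suc i)) = deep_prefix j @ u"
      "deep_prefix (max j (Suc i)) = deep_prefix (Suc i) @ u'"
    using deep_prefix_mono by (metis max.cobounded1 max.cobounded2)
  ultimately have "deep_prefix (Suc i) ! i = deep_prefix j ! i"
    using i by (metis nth_append_left)
  then show "prefix_seq deep_seq (length (deep_prefix j)) ! i = deep_prefix j ! i"
    using i by (simp add: prefix_seq_def deep_seq_def)
qed (simp add: prefix_seq_def)

lemma FS_le_length: "is_FST T \<Longrightarrow> fst_size T \<le> k \<Longrightarrow> fst_out T p = x \<Longrightarrow> FS k x \<le> enat (length p)"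
  unfolding FS_def by (rule INF_lower) blast

lemma le_FS:
  "(\<And>T p. is_FST T \<Longrightarrow> fst_size T \<le> k \<Longrightarrow> fst_out T p = x \<Longrightarrow> b \<le> length p) \<Longrightarrow> enat b \<le> FS k x"
  unfolding FS_def by (rule INF_greatest) auto

lemma FS_gap_deep_prefix:
  fixes j k :: nat
  defines "s \<equiv> deep_prefix (Suc j)"
  assumes "fst (prod_decode j) = k"
  shows "ereal (1/8 * real (length s)) \<le>
    ereal_of_enat (FS k s) - ereal_of_enat (FS (fst_size (block_fst (incompressible_block (Suc k)))) s)"
proof -
  define w where "w = deep_prefix j"
  define x where "x = incompressible_block (Suc k)"
  define c where "c = 4 * length w + 4"
  have x: "Suc k + 8 \<le> length x" "cyclic_incompressible (Suc k) x"
    using incompressible_block_spec unfolding x_def by blast+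
  have "s = w @ concat (replicate (8 * length w + 9) x)"
    using assms(2) by (simp add: s_def w_def x_def)
  also have "8 * length w + 9 = Suc (2 * c)" by (simp add: c_def)
  finally have s: "s = w @ concat (replicate (Suc (2 * c)) x)" .
  have lower: "enat (c * length x) \<le> FS k s"
  proof (rule le_FS)
    fix T p assume "is_FST T" "fst_size T \<le> k" "fst_out T p = s"
    then have "2 * c * length x \<le> 2 * length p"
      using fst_out_replicate_length[of T "Suc k" x] x s by simp
    then show "c * length x \<le> length p" by simp
  qed
  have upper: "FS (fst_size (block_fst x)) s \<le> enat (2 * length w + 1 + 2 * c)"
    using FS_le_length[OF is_FST_block_fst order_refl fst_out_block_fst] s
    by (simp add: length_enc_bits)
  have "(24 * length w + 23) * 8 \<le> (24 * length w + 23) * length x"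
    using x(1) by (intro mult_le_mono2) simp
  then have "length s + 8 * (2 * length w + 1 + 2 * c) \<le> 8 * (c * length x)"
    by (simp add: s c_def length_concat sum_list_replicate algebra_simps)
  then have "real (length s + 8 * (2 * length w + 1 + 2 * c)) \<le> real (8 * (c * length x))"
    by (rule of_nat_mono)
  then have "ereal (1/8 * real (length s)) \<le> ereal (c * length x) - ereal (2 * length w + 1 + 2 * c)"
    by simp
  also have "\<dots> \<le> ereal_of_enat (FS k s) - ereal_of_enat (FS (fst_size (block_fst x)) s)"
    using lower upper by (intro ereal_minus_mono) (metis ereal_of_enat_le_iff ereal_of_enat_simps(1))+
  finally show ?thesis unfolding x_def .
qed

theorem theorem3:
  shows "\<exists>S :: nat \<Rightarrow> bool. fs_deep S"
proof
  show "fs_deep deep_seq"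
    unfolding fs_deep_def
  proof (intro exI[of _ "1/8"] conjI allI)
    fix k
    let ?k' = "fst_size (block_fst (incompressible_block (Suc k)))"
    let ?gap = "\<lambda>n. ereal (1/8 * real n) \<le>
      ereal_of_enat (FS k (prefix_seq deep_seq n)) - ereal_of_enat (FS ?k' (prefix_seq deep_seq n))"
    have "\<exists>n > N. ?gap n" for N
    proof -
      define j where "j = prod_encode (k, N)"
      have "N < length (deep_prefix (Suc j))"
        using le_prod_encode_2[of N k] length_deep_prefix_ge[of "Suc j"] by (simp add: j_def)
      moreover have "fst (prod_decode j) = k" by (simp add: j_def)
      then have "?gap (length (deep_prefix (Suc j)))"
        using FS_gap_deep_prefix by (simp only: prefix_seq_deep_seq)
      ultimately show ?thesis by blast
    qed
    then show "\<exists>k'. \<exists>\<^sub>\<infinity>n. ereal (1/8 * real n) \<le>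
      ereal_of_enat (FS k (prefix_seq deep_seq n)) - ereal_of_enat (FS k' (prefix_seq deep_seq n))"
      unfolding INFM_nat by blast
  qed simp
qed

end
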